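(* Let $X$ be a finite or countably infinite set, let $q$ be a probability distribution on $X$, and let $\mathcal{S}=\langle x_1,\dots,x_n\rangle\in X^n$ be a sample. Let $a\ge 0$ and suppose $f:X\to[0,1]$ has training advantage $\hat\alpha(f)\ge a$. Define the probability distribution $q'(x)=q(x)e^{-af(x)}/Z_{q'}$ where $Z_{q'}=\sum_{x\in X}q(x)e^{-af(x)}$. Then $$\hat{L}(q';\mathcal{S})\le\hat{L}(q;\mathcal{S})-a^2/2.$$
   Context: The log-loss of a distribution $q$ on the sample is $\hat{L}(q;\mathcal{S})=-\frac{1}{n}\sum_{i=1}^n\log q(x_i)$. The empirical expectation is $\hat{\mathrm{E}}_{\mathcal{S}}[h(x)]=\frac1n\sum_{i=1}^n h(x_i)$. The training advantage of $f:X\to[0,1]$ (relative to $q$ and $\mathcal{S}$) is $\hat\alpha(f)=\mathrm{E}_{x\sim q}[f(x)]-\hat{\mathrm{E}}_{\mathcal{S}}[f(x)]$. *)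

theory Defs
  imports "HOL-Probability.Probability"
begin

definition log_loss :: "('a \<Rightarrow> real) \<Rightarrow> 'a list \<Rightarrow> real" where
  "log_loss q xs = - (1 / real (length xs)) * (\<Sum>x\<leftarrow>xs. ln (q x))"

definition emp_exp :: "'a list \<Rightarrow> ('a \<Rightarrow> real) \<Rightarrow> real" where
  "emp_exp xs h = (1 / real (length xs)) * (\<Sum>x\<leftarrow>xs. h x)"

definition train_adv :: "'a pmf \<Rightarrow> 'a list \<Rightarrow> ('a \<Rightarrow> real) \<Rightarrow> real" where
  "train_adv q xs f = measure_pmf.expectation q f - emp_exp xs f"

definition Zq :: "'a pmf \<Rightarrow> real \<Rightarrow> ('a \<Rightarrow> real) \<Rightarrow> real" where
  "Zq q a f = (\<Sum>\<^sub>\<infinity>x\<in>UNIV. pmf q x * exp (- a * f x))"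

definition reweight :: "'a pmf \<Rightarrow> real \<Rightarrow> ('a \<Rightarrow> real) \<Rightarrow> 'a \<Rightarrow> real" where
  "reweight q a f x = pmf q x * exp (- a * f x) / Zq q a f"

end

theory Submission
  imports Defs
begin

text \<open>
  Taking logarithms, the log-loss of the reweighted distribution q' exceeds that of q by exactly
  a times the empirical mean of f plus ln Z.  Since exp (- t) \<le> 1 - t + t^2 / 2 for t \<ge> 0
  and 0 \<le> a f \<le> a, the normaliser satisfies Z \<le> 1 - a E_q[f] + a^2 / 2, hence
  ln Z \<le> Z - 1 \<le> - a E_q[f] + a^2 / 2.  The loss therefore changes by at most
  - a \<cdot> (training advantage) + a^2 / 2 \<le> - a^2 / 2.
\<close>

lemma exp_minus_le_quadratic:
  fixes t :: real
  assumes "0 \<le> t"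
  shows "exp (- t) \<le> 1 - t + t\<^sup>2 / 2"
proof -
  have pos: "0 < 1 + t + t\<^sup>2 / 2"
    using assms by (simp add: add_pos_nonneg)
  have "1 + t + t\<^sup>2 / 2 \<le> exp t"
    using exp_lower_Taylor_quadratic[OF assms] by simp
  then have "exp (- t) \<le> 1 / (1 + t + t\<^sup>2 / 2)"
    using pos by (simp add: exp_minus field_simps)
  also have "\<dots> \<le> 1 - t + t\<^sup>2 / 2"
  proof -
    \<comment> \<open>the product of the two quadratics is 1 + t^4/4\<close>
    have "1 \<le> (1 - t + t\<^sup>2 / 2) * (1 + t + t\<^sup>2 / 2)"
      using assms by (simp add: algebra_simps power2_eq_square)
    then show ?thesis
      using pos by (simp add: divide_le_eq)
  qed
  finally show ?thesis .
qed

lemma pmf_expectation_eq_infsum: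
  fixes g :: "'a \<Rightarrow> real"
  assumes "\<And>x. \<bar>g x\<bar> \<le> B"
  shows "measure_pmf.expectation q g = (\<Sum>\<^sub>\<infinity>x. pmf q x * g x)"
proof -
  have "Infinite_Set_Sum.abs_summable_on (\<lambda>x. pmf q x * B) UNIV"
    by (intro abs_summable_on_cmult_left pmf_abs_summable)
  then have "Infinite_Set_Sum.abs_summable_on (\<lambda>x. pmf q x * g x) UNIV"
    by (rule abs_summable_on_comparison_test')
       (simp add: abs_mult assms mult_left_mono)
  then show ?thesis
    by (simp add: pmf_expectation_eq_infsetsum infsetsum_infsum)
qed

lemma Zq_eq_expectation:
  assumes "\<And>x. 0 \<le> a * f x"
  shows "Zq q a f = measure_pmf.expectation q (\<lambda>x. exp (- a * f x))"
  unfolding Zq_def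
  by (rule pmf_expectation_eq_infsum[where B = 1, symmetric]) (simp add: assms)

lemma Zq_le_quadratic:
  assumes a: "0 \<le> a" and f: "\<And>x. 0 \<le> f x \<and> f x \<le> 1"
  shows "Zq q a f \<le> 1 - a * measure_pmf.expectation q f + a\<^sup>2 / 2"
proof -
  have int_f: "integrable (measure_pmf q) f"
    by (rule measure_pmf.integrable_const_bound[where B = 1]) (use f in \<open>auto simp: abs_le_iff\<close>)
  have int_exp: "integrable (measure_pmf q) (\<lambda>x. exp (- a * f x))"
    by (rule measure_pmf.integrable_const_bound[where B = 1]) (use a f in auto)
  have bound: "exp (- a * f x) \<le> 1 - a * f x + a\<^sup>2 / 2" for x
  proof -
    have "exp (- a * f x) \<le> 1 - a * f x + (a * f x)\<^sup>2 / 2"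
      using exp_minus_le_quadratic[of "a * f x"] a f[of x] by simp
    moreover have "(a * f x)\<^sup>2 \<le> a\<^sup>2"
      using a f[of x] by (simp add: power_mult_distrib power_le_one mult_left_le)
    ultimately show ?thesis by simp
  qed
  have "Zq q a f = measure_pmf.expectation q (\<lambda>x. exp (- a * f x))"
    using a f by (simp add: Zq_eq_expectation)
  also have "\<dots> \<le> measure_pmf.expectation q (\<lambda>x. 1 - a * f x + a\<^sup>2 / 2)"
    by (rule integral_mono[OF int_exp]) (use int_f bound in auto)
  also have "\<dots> = 1 - a * measure_pmf.expectation q f + a\<^sup>2 / 2"
    using int_f by simp
  finally show ?thesis .
qed

lemma exp_minus_le_Zq:
  assumes a: "0 \<le> a" and f: "\<And>x. 0 \<le> f x \<and> f x \<le> 1"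
  shows "exp (- a) \<le> Zq q a f"
proof -
  have "exp (- a) \<le> measure_pmf.expectation q (\<lambda>x. exp (- a * f x))"
  proof (rule measure_pmf.integral_ge_const)
    show "integrable (measure_pmf q) (\<lambda>x. exp (- a * f x))"
      by (rule measure_pmf.integrable_const_bound[where B = 1]) (use a f in auto)
    show "AE x in measure_pmf q. exp (- a) \<le> exp (- a * f x)"
      using a f by (simp add: mult_left_le)
  qed
  then show ?thesis
    using a f by (simp add: Zq_eq_expectation)
qed

lemma log_loss_reweight:
  assumes "xs \<noteq> []" and pos: "\<And>x. x \<in> set xs \<Longrightarrow> 0 < pmf q x" and Z: "0 < Zq q a f"
  shows "log_loss (reweight q a f) xs = log_loss (pmf q) xs + a * emp_exp xs f + ln (Zq q a f)"
proof -
  have "ln (reweight q a f x) = ln (pmf q x) - a * f x - ln (Zq q a f)" if "x \<in> set xs" for x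
    using pos[OF that] Z by (simp add: reweight_def ln_div ln_mult)
  then have "(\<Sum>x\<leftarrow>xs. ln (reweight q a f x)) = (\<Sum>x\<leftarrow>xs. ln (pmf q x) - a * f x - ln (Zq q a f))"
    by (intro arg_cong[where f = sum_list] map_cong) simp_all
  also have "\<dots> = (\<Sum>x\<leftarrow>xs. ln (pmf q x)) - a * (\<Sum>x\<leftarrow>xs. f x) - real (length xs) * ln (Zq q a f)"
    by (simp add: sum_list_subtractf sum_list_const_mult sum_list_triv)
  finally show ?thesis
    using \<open>xs \<noteq> []\<close> by (simp add: log_loss_def emp_exp_def field_simps)
qed

theorem lemma1:
  fixes q :: "'a::countable pmf" and xs :: "'a list" and a :: real and f :: "'a \<Rightarrow> real"
  assumes "xs \<noteq> []"
    and "\<And>x. x \<in> set xs \<Longrightarrow> pmf q x > 0"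
    and "a \<ge> 0"
    and "\<And>x. 0 \<le> f x \<and> f x \<le> 1"
    and "train_adv q xs f \<ge> a"
  shows "log_loss (reweight q a f) xs \<le> log_loss (pmf q) xs - a\<^sup>2 / 2"
proof -
  have Z_pos: "0 < Zq q a f"
    using exp_minus_le_Zq[of a f q, OF assms(3,4)] by (rule less_le_trans[OF exp_gt_zero])
  have "ln (Zq q a f) \<le> - a * measure_pmf.expectation q f + a\<^sup>2 / 2"
    using ln_le_minus_one[OF Z_pos] Zq_le_quadratic[of a f q, OF assms(3,4)] by simp
  moreover have "a * a \<le> a * train_adv q xs f"
    using mult_left_mono[OF assms(5,3)] .
  ultimately show ?thesis
    using log_loss_reweight[OF assms(1,2) Z_pos]
    by (simp add: train_adv_def algebra_simps power2_eq_square)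
qed

end
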